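(* Let $V$ be a unital JB-algebra, $a$ a projection in $V$ and $u$ a tripotent in $V_{1/2}(a)$. Then: (i) $p:=au^2$ is a projection satisfying $p\le a$, $u\in V_{1/2}(p)$ and $pu^2=p$; (ii) if $u\neq0$ then $p\neq0$; (iii) if $u$ and $v$ are orthogonal tripotents in $V_{1/2}(a)$, then $p:=au^2$ and $q:=av^2$ are orthogonal projections ($pq=0$) and $pv=uq=0$.
   Context: Products are the Jordan product of $V$, written by juxtaposition. The triple product is $\{xyz\}=(xy)z-(zx)y+(yz)x$. A projection is an idempotent $p=p^2$; $p\le a$ is the usual order of projections. A tripotent is $u$ with $\{uuu\}=u$. $V_{1/2}(a)=\{x: ax=\frac12x\}$. Tripotents $u,v$ are orthogonal if $\{uvv\}=0$ (equivalently $\{uuv\}=0$). *)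

theory Defs
  imports "HOL-Analysis.Analysis"
begin

definition jordan_algebra :: "('a::real_vector \<Rightarrow> 'a \<Rightarrow> 'a) \<Rightarrow> bool" where
  "jordan_algebra jp \<longleftrightarrow>
     bilinear jp \<and>
     (\<forall>x y. jp x y = jp y x) \<and>
     (\<forall>x y. jp (jp x y) (jp x x) = jp x (jp y (jp x x)))"

definition JB_algebra :: "('a::banach \<Rightarrow> 'a \<Rightarrow> 'a) \<Rightarrow> bool" where
  "JB_algebra jp \<longleftrightarrow>
     jordan_algebra jp \<and>
     (\<forall>x y. norm (jp x y) \<le> norm x * norm y) \<and>
     (\<forall>x. norm (jp x x) = (norm x)\<^sup>2) \<and>
     (\<forall>x y. norm (jp x x) \<le> norm (jp x x + jp y y))"

definition unital_JB_algebra :: "('a::banach \<Rightarrow> 'a \<Rightarrow> 'a) \<Rightarrow> 'a \<Rightarrow> bool" where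
  "unital_JB_algebra jp e \<longleftrightarrow> JB_algebra jp \<and> (\<forall>x. jp e x = x)"

definition triple :: "('a::real_vector \<Rightarrow> 'a \<Rightarrow> 'a) \<Rightarrow> 'a \<Rightarrow> 'a \<Rightarrow> 'a \<Rightarrow> 'a" where
  "triple jp x y z = jp (jp x y) z - jp (jp z x) y + jp (jp y z) x"

definition projection :: "('a::real_vector \<Rightarrow> 'a \<Rightarrow> 'a) \<Rightarrow> 'a \<Rightarrow> bool" where
  "projection jp p \<longleftrightarrow> jp p p = p"

definition proj_le :: "('a::real_vector \<Rightarrow> 'a \<Rightarrow> 'a) \<Rightarrow> 'a \<Rightarrow> 'a \<Rightarrow> bool" where
  "proj_le jp p q \<longleftrightarrow> jp p q = p"

definition tripotent :: "('a::real_vector \<Rightarrow> 'a \<Rightarrow> 'a) \<Rightarrow> 'a \<Rightarrow> bool" where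
  "tripotent jp u \<longleftrightarrow> triple jp u u u = u"

definition half_space :: "('a::real_vector \<Rightarrow> 'a \<Rightarrow> 'a) \<Rightarrow> 'a \<Rightarrow> 'a set" where
  "half_space jp a = {x. jp a x = (1/2) *\<^sub>R x}"

definition orth_trip :: "('a::real_vector \<Rightarrow> 'a \<Rightarrow> 'a) \<Rightarrow> 'a \<Rightarrow> 'a \<Rightarrow> bool" where
  "orth_trip jp u v \<longleftrightarrow> triple jp u v v = 0"

end

theory Submission
  imports Defs
begin

text \<open>Two consequences of the linearized Jordan identity do all the work. If
  \<open>u \<in> V\<^sub>1\<^sub>/\<^sub>2(a)\<close>, then multiplication by \<open>a\<close> commutes with multiplication by \<open>u\<^sup>2\<close>; since
  \<open>u\<^sup>2\<close> is idempotent whenever \<open>u\<close> is a tripotent, \<open>p = a u\<^sup>2\<close> is a projection below \<open>a\<close>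
  and \<open>u\<^sup>2\<close>. And for an idempotent \<open>f\<close> the Peirce spaces \<open>V\<^sub>0(f)\<close> and \<open>V\<^sub>1(f)\<close> multiply
  to zero; applied to \<open>f = v\<^sup>2\<close> and \<open>f = u\<^sup>2\<close> this turns the orthogonality \<open>v\<^sup>2 u = 0\<close> into
  \<open>u v = 0\<close>, \<open>u\<^sup>2 v\<^sup>2 = 0\<close>, \<open>u\<^sup>2 v = 0\<close> and finally \<open>p q = 0\<close>.\<close>

locale jordan_alg =
  fixes jp :: "'a::real_vector \<Rightarrow> 'a \<Rightarrow> 'a"
  assumes jordan: "jordan_algebra jp"
begin

lemma bilinear: "bilinear jp"
  and commute: "jp x y = jp y x"
  and jordan_identity: "jp (jp x y) (jp x x) = jp x (jp y (jp x x))"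
  using jordan unfolding jordan_algebra_def by blast+

lemmas bilinear_simps [simp] =
  bilinear_ladd[OF bilinear] bilinear_radd[OF bilinear]
  bilinear_lsub[OF bilinear] bilinear_rsub[OF bilinear]
  bilinear_lneg[OF bilinear] bilinear_rneg[OF bilinear]
  bilinear_lmul[OF bilinear] bilinear_rmul[OF bilinear]
  bilinear_lzero[OF bilinear] bilinear_rzero[OF bilinear]

text \<open>The coefficient of \<open>t\<close> in the Jordan identity for \<open>x + t w\<close>; it is isolated by
  evaluating at \<open>t = 1\<close> and \<open>t = -1\<close> and removing the cubic term.\<close>

lemma jordan_identity_linearized:
  "jp (jp w y) (jp x x) + 2 *\<^sub>R jp (jp x y) (jp x w)
     = jp w (jp y (jp x x)) + 2 *\<^sub>R jp x (jp y (jp x w))"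
proof -
  define D where "D z = jp (jp z y) (jp z z) - jp z (jp y (jp z z))" for z
  have "D z = 0" for z
    by (simp add: D_def jordan_identity)
  moreover have "D (x + w) - D (x - w) - 2 *\<^sub>R D w
      = 2 *\<^sub>R ((jp (jp w y) (jp x x) + 2 *\<^sub>R jp (jp x y) (jp x w))
               - (jp w (jp y (jp x x)) + 2 *\<^sub>R jp x (jp y (jp x w))))"
    by (simp add: D_def commute[of w x] scaleR_2 algebra_simps)
  ultimately show ?thesis
    by simp
qed

lemma peirce_zero_one_orthogonal:
  assumes f: "jp f f = f" and x: "jp f x = 0" and y: "jp f y = y"
  shows "jp x y = 0"
proof -
  have "jp (jp x y) f = jp x y"
    using jordan_identity_linearized[of x y f] by (simp add: f x y commute[of y f])
  moreover have "jp (jp x y) f = 2 *\<^sub>R jp f (jp x y)"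
    using jordan_identity_linearized[of y x f]
    by (simp add: f x y commute[of x f] commute[of y x])
  ultimately show ?thesis
    by (metis commute scaleR_2 add_cancel_right_right)
qed

lemma half_space_mult_square_commute:
  assumes "jp a u = (1/2) *\<^sub>R u"
  shows "jp (jp a y) (jp u u) = jp a (jp y (jp u u))"
  using jordan_identity_linearized[of a y u] assms
  by (simp add: commute[of u a] commute[of u y] commute[of "jp y u" u])

lemma tripotent_square_mult:
  assumes "tripotent jp u"
  shows "jp (jp u u) u = u"
  using assms unfolding tripotent_def triple_def by simp

lemma tripotent_square_idempotent:
  assumes "tripotent jp u"
  shows "jp (jp u u) (jp u u) = jp u u"
  using jordan_identity[of u u] tripotent_square_mult[OF assms]
  by (simp add: commute[of u "jp u u"])

lemma orth_trip_iff: "orth_trip jp u v \<longleftrightarrow> jp (jp v v) u = 0"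
  unfolding orth_trip_def triple_def by (simp add: commute[of u v])

lemma half_square_mult_left:
  assumes a: "jp a a = a" and au: "jp a u = (1/2) *\<^sub>R u"
  shows "jp a (jp a (jp u u)) = jp a (jp u u)"
  using half_space_mult_square_commute[OF au, of a] by (simp add: a)

lemma half_square_mult_square:
  assumes u: "tripotent jp u" and au: "jp a u = (1/2) *\<^sub>R u"
  shows "jp (jp a (jp u u)) (jp u u) = jp a (jp u u)"
  using half_space_mult_square_commute[OF au, of "jp u u"]
  by (simp add: tripotent_square_idempotent[OF u])

lemma half_square_idempotent:
  assumes a: "jp a a = a" and u: "tripotent jp u" and au: "jp a u = (1/2) *\<^sub>R u"
  shows "jp (jp a (jp u u)) (jp a (jp u u)) = jp a (jp u u)"
  using jordan_identity_linearized[of a a "jp u u"]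
  by (simp add: a tripotent_square_idempotent[OF u] half_square_mult_left[OF a au]
      half_square_mult_square[OF u au] commute[of "jp u u" a]
      commute[of "jp u u" "jp a (jp u u)"])

lemma half_square_half_space:
  assumes u: "tripotent jp u" and au: "jp a u = (1/2) *\<^sub>R u"
  shows "jp (jp a (jp u u)) u = (1/2) *\<^sub>R u"
  using jordan_identity[of u a] tripotent_square_mult[OF u]
  by (simp add: au commute[of u a] commute[of u "jp u u"] commute[of "jp a (jp u u)" u])

lemma orth_trip_mult_zero:
  assumes v: "tripotent jp v" and uv: "orth_trip jp u v"
  shows "jp u v = 0"
  using peirce_zero_one_orthogonal tripotent_square_idempotent[OF v]
    uv[unfolded orth_trip_iff] tripotent_square_mult[OF v] .

lemma orth_trip_squares_orthogonal:
  assumes v: "tripotent jp v" and uv: "orth_trip jp u v"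
  shows "jp (jp u u) (jp v v) = 0"
  using jordan_identity_linearized[of u u v] uv[unfolded orth_trip_iff]
  by (simp add: orth_trip_mult_zero[OF v uv] commute[of v u] commute[of u "jp v v"])

lemma orth_trip_square_mult_zero:
  assumes v: "tripotent jp v" and uv: "orth_trip jp u v"
  shows "jp (jp u u) v = 0"
proof (rule peirce_zero_one_orthogonal)
  show "jp (jp v v) (jp v v) = jp v v" "jp (jp v v) v = v"
    using tripotent_square_idempotent[OF v] tripotent_square_mult[OF v] .
  show "jp (jp v v) (jp u u) = 0"
    using orth_trip_squares_orthogonal[OF v uv] by (simp add: commute[of "jp v v" "jp u u"])
qed

lemma orth_trip_half_square_mult_left:
  assumes v: "tripotent jp v" and av: "jp a v = (1/2) *\<^sub>R v" and uv: "orth_trip jp u v"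
  shows "jp (jp a (jp u u)) v = 0"
  using jordan_identity_linearized[of v a u]
  by (simp add: av orth_trip_mult_zero[OF v uv] orth_trip_square_mult_zero[OF v uv]
      commute[of v a] commute[of v "jp u u"] commute[of "jp a (jp u u)" v])

lemma orth_trip_half_square_mult_right:
  assumes v: "tripotent jp v" and au: "jp a u = (1/2) *\<^sub>R u" and av: "jp a v = (1/2) *\<^sub>R v"
    and uv: "orth_trip jp u v"
  shows "jp u (jp a (jp v v)) = 0"
  using jordan_identity_linearized[of u a v] uv[unfolded orth_trip_iff]
  by (simp add: au av orth_trip_mult_zero[OF v uv]
      commute[of u a] commute[of u "jp v v"] commute[of v u])

lemma orth_trip_half_squares_orthogonal:
  assumes a: "jp a a = a" and v: "tripotent jp v" and av: "jp a v = (1/2) *\<^sub>R v"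
    and uv: "orth_trip jp u v"
  shows "jp (jp a (jp u u)) (jp a (jp v v)) = 0"
proof (rule peirce_zero_one_orthogonal[where f = "jp v v"])
  show "jp (jp v v) (jp v v) = jp v v"
    using tripotent_square_idempotent[OF v] .
  show "jp (jp v v) (jp a (jp u u)) = 0"
    using half_space_mult_square_commute[OF av, of "jp u u"] orth_trip_squares_orthogonal[OF v uv]
    by (simp add: commute[of "jp v v" "jp a (jp u u)"])
  show "jp (jp v v) (jp a (jp v v)) = jp a (jp v v)"
    using half_square_mult_square[OF v av] by (simp add: commute[of "jp v v" "jp a (jp v v)"])
qed

end

theorem proposition2p4:
  fixes jp :: "'a::banach \<Rightarrow> 'a \<Rightarrow> 'a" and e a u :: 'a
  assumes V: "unital_JB_algebra jp e"
    and a: "projection jp a"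
    and u: "tripotent jp u" "u \<in> half_space jp a"
  shows "(let p = jp a (jp u u) in
            projection jp p \<and> proj_le jp p a \<and> u \<in> half_space jp p
            \<and> jp p (jp u u) = p)
       \<and> (u \<noteq> 0 \<longrightarrow> jp a (jp u u) \<noteq> 0)
       \<and> (\<forall>v. tripotent jp v \<and> v \<in> half_space jp a \<and> orth_trip jp u v \<longrightarrow>
            (let p = jp a (jp u u); q = jp a (jp v v) in
               projection jp p \<and> projection jp q \<and> jp p q = 0
               \<and> jp p v = 0 \<and> jp u q = 0))"
proof -
  interpret jordan_alg jp
    using V unfolding unital_JB_algebra_def JB_algebra_def by unfold_locales blast
  have aa: "jp a a = a" and au: "jp a u = (1/2) *\<^sub>R u"
    using a u(2) unfolding projection_def half_space_def by simp_all
  have "jp (jp a (jp u u)) a = jp a (jp u u)"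
    using half_square_mult_left[OF aa au] by (simp add: commute[of _ a])
  then show ?thesis
    unfolding Let_def projection_def proj_le_def half_space_def mem_Collect_eq
    using half_square_idempotent[OF aa u(1) au] half_square_half_space[OF u(1) au]
      half_square_mult_square[OF u(1) au] half_square_idempotent[OF aa]
      orth_trip_half_squares_orthogonal[OF aa] orth_trip_half_square_mult_left
      orth_trip_half_square_mult_right[OF _ au]
    by auto
qed

end
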